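(* For every $n\ge1$, the transitive tournament $I_n$ has exactly $F_n$ matching orderings, where $F_0=F_1=1$ and $F_i=F_{i-1}+F_{i-2}$ for $i\ge2$.
   Context: A tournament is a finite, non-null, loopless directed graph in which for any two distinct vertices $u,v$ there is exactly one edge with both ends in $\{u,v\}$; write $u\to v$ for the edge from $u$ to $v$. $I_n$ is the transitive tournament on $n$ vertices, i.e. vertices $v_1,\dots,v_n$ with $v_i\to v_j$ whenever $i<j$. Given an ordering of the vertices, a backedge is an edge from a later vertex to an earlier one; the ordering is a matching ordering if every vertex is the head or tail of at most one backedge. *)

theory Defs
  imports Main
begin

(* A digraph is given by a vertex set V and an edge set E of pairs (tail, head). *)
type_synonym 'a digraph = "'a set \<times> ('a \<times> 'a) set"

definition is_tournament :: "'a digraph \<Rightarrow> bool" where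
  "is_tournament T = (let (V, E) = T in
     finite V \<and> V \<noteq> {} \<and> E \<subseteq> V \<times> V \<and> (\<forall>v. (v, v) \<notin> E) \<and>
     (\<forall>u\<in>V. \<forall>v\<in>V. u \<noteq> v \<longrightarrow> ((u, v) \<in> E \<longleftrightarrow> (v, u) \<notin> E)))"

definition transitive_tournament :: "nat \<Rightarrow> nat digraph" where
  "transitive_tournament n = ({1..n}, {(i, j). i \<in> {1..n} \<and> j \<in> {1..n} \<and> i < j})"

definition orderings :: "'a set \<Rightarrow> 'a list set" where
  "orderings V = {xs. distinct xs \<and> set xs = V}"

definition backedges :: "('a \<times> 'a) set \<Rightarrow> 'a list \<Rightarrow> ('a \<times> 'a) set" where
  "backedges E xs = {(xs ! q, xs ! p) | p q. p < q \<and> q < length xs \<and> (xs ! q, xs ! p) \<in> E}"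

definition matching_ordering :: "'a digraph \<Rightarrow> 'a list \<Rightarrow> bool" where
  "matching_ordering T xs = (let (V, E) = T in
     xs \<in> orderings V \<and>
     (\<forall>v\<in>V. card {e \<in> backedges E xs. fst e = v \<or> snd e = v} \<le> 1))"

fun F :: "nat \<Rightarrow> nat" where
  "F 0 = 1"
| "F (Suc 0) = 1"
| "F (Suc (Suc i)) = F (Suc i) + F i"

end

theory Submission
  imports Defs
begin

text \<open>
  In a matching ordering of \<open>I\<^sub>n\<close> (\<open>n \<ge> 2\<close>) every vertex placed after the top vertex \<open>n\<close>
  is the tail of a backedge into \<open>n\<close>, so at most one vertex follows \<open>n\<close>; if one does, it is
  \<open>n - 1\<close>, as any smaller vertex would also be the tail of a backedge into the earlier \<open>n - 1\<close>.
  Conversely, appending \<open>n\<close> to a matching ordering of \<open>I\<^sub>n\<^sub>-\<^sub>1\<close> creates no backedge,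
  and appending \<open>n, n - 1\<close> to one of \<open>I\<^sub>n\<^sub>-\<^sub>2\<close> creates a single backedge disjoint from
  all others. So the numbers of matching orderings obey the Fibonacci recursion.
\<close>

lemma backedges_append:
  "backedges E (xs @ ys) =
     backedges E xs \<union> backedges E ys \<union> {(u, v). u \<in> set ys \<and> v \<in> set xs \<and> (u, v) \<in> E}"
  (is "_ = ?L \<union> ?R \<union> ?C")
proof (intro set_eqI iffI)
  fix e assume "e \<in> backedges E (xs @ ys)"
  then obtain p q where e: "e = ((xs @ ys) ! q, (xs @ ys) ! p)" "p < q" "q < length (xs @ ys)"
    "((xs @ ys) ! q, (xs @ ys) ! p) \<in> E" unfolding backedges_def by blast
  consider "q < length xs" | "length xs \<le> p" | "p < length xs" "length xs \<le> q" by linarith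
  then show "e \<in> ?L \<union> ?R \<union> ?C"
  proof cases
    case 1
    with e have "e \<in> ?L" unfolding backedges_def by (auto simp: nth_append)
    then show ?thesis by blast
  next
    case 2
    with e have "e = (ys ! (q - length xs), ys ! (p - length xs)) \<and> p - length xs < q - length xs
        \<and> q - length xs < length ys \<and> e \<in> E"
      by (auto simp: nth_append)
    then have "e \<in> ?R" unfolding backedges_def by blast
    then show ?thesis by blast
  next
    case 3
    with e show ?thesis by (auto simp: nth_append)
  qed
next
  fix e assume "e \<in> ?L \<union> ?R \<union> ?C"
  then consider "e \<in> ?L" | "e \<in> ?R" | "e \<in> ?C" by blast
  then show "e \<in> backedges E (xs @ ys)"
  proof cases
    case 1
    then obtain p q where "e = (xs ! q, xs ! p)" "p < q" "q < length xs" "(xs ! q, xs ! p) \<in> E"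
      unfolding backedges_def by blast
    then show ?thesis unfolding backedges_def
      by (intro CollectI exI[of _ p] exI[of _ q]) (auto simp: nth_append)
  next
    case 2
    then obtain p q where "e = (ys ! q, ys ! p)" "p < q" "q < length ys" "(ys ! q, ys ! p) \<in> E"
      unfolding backedges_def by blast
    then show ?thesis unfolding backedges_def
      by (intro CollectI exI[of _ "length xs + p"] exI[of _ "length xs + q"]) (auto simp: nth_append)
  next
    case 3
    then obtain u v where "e = (u, v)" "u \<in> set ys" "v \<in> set xs" "(u, v) \<in> E" by blast
    moreover from this obtain p q where "p < length xs" "xs ! p = v" "q < length ys" "ys ! q = u"
      by (auto simp: in_set_conv_nth)
    ultimately show ?thesis unfolding backedges_def
      by (intro CollectI exI[of _ p] exI[of _ "length xs + q"]) (auto simp: nth_append)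
  qed
qed

lemma backedges_Nil [simp]: "backedges E [] = {}"
  and backedges_single [simp]: "backedges E [x] = {}"
  unfolding backedges_def by auto

lemma backedges_subset: "backedges E xs \<subseteq> set xs \<times> set xs"
  unfolding backedges_def by auto

lemma finite_backedges: "finite (backedges E xs)"
  by (rule finite_subset[OF backedges_subset]) simp

lemma backedges_cong:
  assumes "\<And>u v. u \<in> set xs \<Longrightarrow> v \<in> set xs \<Longrightarrow> (u, v) \<in> E \<longleftrightarrow> (u, v) \<in> E'"
  shows "backedges E xs = backedges E' xs"
  unfolding backedges_def using assms by (metis (no_types, opaque_lifting) nth_mem order.strict_trans)

definition is_matching :: "('a \<times> 'a) set \<Rightarrow> bool" where
  "is_matching B = (\<forall>v. card {e \<in> B. fst e = v \<or> snd e = v} \<le> 1)"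

lemma matching_ordering_iff:
  "matching_ordering (V, E) xs \<longleftrightarrow> xs \<in> orderings V \<and> is_matching (backedges E xs)"
proof -
  let ?I = "\<lambda>v. {e \<in> backedges E xs. fst e = v \<or> snd e = v}"
  have "card (?I v) \<le> 1" if "v \<notin> set xs" for v
  proof -
    have "?I v = {}"
      using backedges_subset[of E xs] that by auto
    then show ?thesis
      by (simp only: card.empty)
  qed
  then show ?thesis
    unfolding matching_ordering_def is_matching_def orderings_def by fastforce
qed

lemma is_matching_empty [simp]: "is_matching {}"
  unfolding is_matching_def by simp

lemma not_is_matching:
  assumes "finite B" "e \<in> B" "e' \<in> B" "e \<noteq> e'"
    and "fst e = v \<or> snd e = v" "fst e' = v \<or> snd e' = v"
  shows "\<not> is_matching B"
proof -
  have "card {e \<in> B. fst e = v \<or> snd e = v} \<ge> card {e, e'}"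
    using assms by (intro card_mono) auto
  then show ?thesis
    unfolding is_matching_def using assms(4) by (auto simp: not_le intro!: exI[of _ v])
qed

lemma is_matching_insert_iff:
  assumes "\<forall>e' \<in> B. {fst e', snd e'} \<inter> {fst e, snd e} = {}"
  shows "is_matching (insert e B) \<longleftrightarrow> is_matching B"
proof -
  let ?I = "\<lambda>B v. {e' \<in> B. fst e' = v \<or> snd e' = v}"
  have "card (?I (insert e B) v) \<le> 1 \<longleftrightarrow> card (?I B v) \<le> 1" for v
  proof (cases "v \<in> {fst e, snd e}")
    case True
    then have I: "?I (insert e B) v = {e}" "?I B v = {}"
      using assms by auto
    show ?thesis
      unfolding I by simp
  next
    case False
    then have I: "?I (insert e B) v = ?I B v"
      by auto
    show ?thesis
      unfolding I ..
  qed
  then show ?thesis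
    unfolding is_matching_def by blast
qed

definition less_rel :: "('a::ord \<times> 'a) set" where
  "less_rel = {(i, j). i < j}"

lemma backedges_less_snoc_greater:
  fixes ys :: "'a::linorder list"
  assumes "\<forall>y \<in> set ys. y < x"
  shows "backedges less_rel (ys @ [x]) = backedges less_rel ys"
  using assms by (auto simp: backedges_append less_rel_def)

lemma backedges_less_append_pair:
  fixes ys :: "'a::linorder list"
  assumes "\<forall>y \<in> set ys. y < a" "a < m"
  shows "backedges less_rel (ys @ [m, a]) = insert (a, m) (backedges less_rel ys)"
  using assms backedges_append[of less_rel ys "[m, a]"] backedges_append[of less_rel "[m]" "[a]"]
  by (auto simp: less_rel_def)

lemma is_matching_less_snoc_greater:
  fixes ys :: "'a::linorder list"
  assumes "\<forall>y \<in> set ys. y < x"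
  shows "is_matching (backedges less_rel (ys @ [x])) \<longleftrightarrow> is_matching (backedges less_rel ys)"
  using assms by (simp add: backedges_less_snoc_greater)

lemma is_matching_less_append_pair:
  fixes ys :: "'a::linorder list"
  assumes "\<forall>y \<in> set ys. y < a" "a < m"
  shows "is_matching (backedges less_rel (ys @ [m, a])) \<longleftrightarrow> is_matching (backedges less_rel ys)"
proof -
  have "a \<notin> set ys" "m \<notin> set ys"
    using assms by auto
  then show ?thesis
    unfolding backedges_less_append_pair[OF assms]
    by (intro is_matching_insert_iff) (use backedges_subset[of less_rel ys] in auto)
qed

lemma finite_orderings: "finite V \<Longrightarrow> finite (orderings V)"
  unfolding orderings_def by (rule finite_subset[OF _ finite_subset_distinct]) auto

lemma orderings_append_iff:
  assumes "distinct zs" "set zs \<inter> A = {}"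
  shows "ys @ zs \<in> orderings (A \<union> set zs) \<longleftrightarrow> ys \<in> orderings A"
  using assms unfolding orderings_def by auto

lemma orderings_singleton: "orderings {x} = {[x]}"
proof -
  have "xs = [x]" if "distinct xs" "set xs = {x}" for xs
  proof -
    have "length xs = 1"
      using distinct_card[OF that(1)] that(2) by simp
    then show ?thesis
      using that(2) by (cases xs) auto
  qed
  then show ?thesis
    unfolding orderings_def by auto
qed

definition matching_orderings_upto :: "nat \<Rightarrow> nat list set" where
  "matching_orderings_upto n = {xs \<in> orderings {1..n}. is_matching (backedges less_rel xs)}"

lemma matching_orderings_transitive_tournament:
  "{xs. matching_ordering (transitive_tournament n) xs} = matching_orderings_upto n"
proof -
  have "backedges {(i, j). i \<in> {1..n} \<and> j \<in> {1..n} \<and> i < j} xs = backedges less_rel xs"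
    if "xs \<in> orderings {1..n}" for xs
    using that by (intro backedges_cong) (auto simp: orderings_def less_rel_def)
  then show ?thesis
    unfolding transitive_tournament_def matching_ordering_iff matching_orderings_upto_def by auto
qed

lemma matching_orderings_upto_Suc_Suc_cases:
  assumes "xs \<in> matching_orderings_upto (Suc (Suc n))"
  obtains ys where "xs = ys @ [Suc (Suc n)]"
    | ys where "xs = ys @ [Suc (Suc n), Suc n]"
proof -
  define m where "m = Suc (Suc n)"
  define B where "B = backedges less_rel xs"
  have xs: "distinct xs" "set xs = {1..m}" and B: "is_matching B"
    using assms unfolding matching_orderings_upto_def orderings_def m_def B_def by auto
  have "finite B"
    unfolding B_def by (rule finite_backedges)
  obtain ys zs where xs_split: "xs = ys @ m # zs"
    using split_list[of m xs] xs(2) unfolding m_def by auto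
  have zs: "distinct zs" "m \<notin> set zs" "set zs \<subseteq> {1..m}"
    using xs xs_split by auto
  have back_to_m: "(a, m) \<in> B" if "a \<in> set zs" for a
  proof -
    have "a < m"
      using zs that by (metis atLeastAtMost_iff le_neq_implies_less subsetD)
    then show ?thesis
      using that backedges_append[of less_rel "ys @ [m]" zs] xs_split
      unfolding B_def less_rel_def by auto
  qed
  \<comment> \<open>two vertices after \<open>m\<close> would give two backedges into \<open>m\<close>\<close>
  have "\<forall>a \<in> set zs. \<forall>b \<in> set zs. a = b"
    using not_is_matching[OF \<open>finite B\<close> back_to_m back_to_m, of _ _ m] B by auto
  then have "card (set zs) \<le> 1"
    by (simp add: card_le_Suc0_iff_eq)
  then consider "zs = []" | a where "zs = [a]"
    using distinct_card[OF zs(1)] by (cases zs) auto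
  then show thesis
  proof cases
    case 1
    with xs_split that(1) show thesis
      unfolding m_def by simp
  next
    case (2 a)
    have "a = Suc n"
    proof (rule ccontr)
      assume "a \<noteq> Suc n"
      moreover have "Suc n \<in> set xs"
        unfolding xs(2) m_def by simp
      ultimately have "a < Suc n" "Suc n \<in> set ys"
        using zs xs_split 2 unfolding m_def by auto
      then have "(a, Suc n) \<in> B"
        using backedges_append[of less_rel ys "[m, a]"] xs_split 2
        unfolding B_def less_rel_def by auto
      moreover have "(a, Suc n) \<noteq> (a, m)"
        unfolding m_def by simp
      ultimately show False
        using not_is_matching[OF \<open>finite B\<close> _ back_to_m, of "(a, Suc n)" a a] B 2 by auto
    qed
    with xs_split 2 that(2) show thesis
      unfolding m_def by simp
  qed
qed

lemma snoc_in_matching_orderings_upto_iff: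
  "ys @ [Suc n] \<in> matching_orderings_upto (Suc n) \<longleftrightarrow> ys \<in> matching_orderings_upto n"
proof -
  have "ys @ [Suc n] \<in> orderings {1..Suc n} \<longleftrightarrow> ys \<in> orderings {1..n}"
    using orderings_append_iff[of "[Suc n]" "{1..n}" ys] by (simp add: atLeastAtMostSuc_conv)
  moreover have "is_matching (backedges less_rel (ys @ [Suc n])) \<longleftrightarrow> is_matching (backedges less_rel ys)"
    if "ys \<in> orderings {1..n}"
    using that by (intro is_matching_less_snoc_greater) (auto simp: orderings_def)
  ultimately show ?thesis
    unfolding matching_orderings_upto_def by blast
qed

lemma append_pair_in_matching_orderings_upto_iff:
  "ys @ [Suc (Suc n), Suc n] \<in> matching_orderings_upto (Suc (Suc n)) \<longleftrightarrow>
     ys \<in> matching_orderings_upto n"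
proof -
  have "ys @ [Suc (Suc n), Suc n] \<in> orderings {1..Suc (Suc n)} \<longleftrightarrow> ys \<in> orderings {1..n}"
    using orderings_append_iff[of "[Suc (Suc n), Suc n]" "{1..n}" ys]
    by (simp add: atLeastAtMostSuc_conv insert_commute)
  moreover have "is_matching (backedges less_rel (ys @ [Suc (Suc n), Suc n])) \<longleftrightarrow>
      is_matching (backedges less_rel ys)" if "ys \<in> orderings {1..n}"
    using that by (intro is_matching_less_append_pair) (auto simp: orderings_def)
  ultimately show ?thesis
    unfolding matching_orderings_upto_def by blast
qed

lemma matching_orderings_upto_Suc_Suc:
  "matching_orderings_upto (Suc (Suc n)) =
     (\<lambda>ys. ys @ [Suc (Suc n)]) ` matching_orderings_upto (Suc n) \<union>
     (\<lambda>ys. ys @ [Suc (Suc n), Suc n]) ` matching_orderings_upto n"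
  (is "?M = ?A \<union> ?B")
proof (intro set_eqI iffI)
  fix xs
  assume "xs \<in> ?M"
  then show "xs \<in> ?A \<union> ?B"
  proof (cases rule: matching_orderings_upto_Suc_Suc_cases)
    case (1 ys)
    with \<open>xs \<in> ?M\<close> show ?thesis
      by (auto simp: snoc_in_matching_orderings_upto_iff)
  next
    case (2 ys)
    with \<open>xs \<in> ?M\<close> show ?thesis
      by (auto simp: append_pair_in_matching_orderings_upto_iff)
  qed
next
  fix xs
  assume "xs \<in> ?A \<union> ?B"
  then show "xs \<in> ?M"
    using snoc_in_matching_orderings_upto_iff append_pair_in_matching_orderings_upto_iff by blast
qed

lemma card_matching_orderings_upto: "card (matching_orderings_upto n) = F n"
proof (induction n rule: F.induct)
  case 1
  have "matching_orderings_upto 0 = {[]}"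
    by (auto simp: matching_orderings_upto_def orderings_def)
  then show ?case
    by simp
next
  case 2
  have "matching_orderings_upto 1 = {[1]}"
    by (auto simp: matching_orderings_upto_def orderings_singleton)
  then show ?case
    by simp
next
  case (3 n)
  have "finite (matching_orderings_upto k)" for k
    unfolding matching_orderings_upto_def by (simp add: finite_orderings)
  then show ?case
    unfolding matching_orderings_upto_Suc_Suc
    by (subst card_Un_disjoint) (auto simp: card_image inj_on_def 3)
qed

theorem corollary5p7:
  fixes n :: nat
  assumes "n \<ge> 1"
  shows "card {xs. matching_ordering (transitive_tournament n) xs} = F n"
  by (simp add: matching_orderings_transitive_tournament card_matching_orderings_upto)

end
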